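(* Let $\mathbb{T}_S$ be a spherically symmetric tree with origin $\mathcal{O}$, and consider the cone percolation process on $\mathbb{T}_S$ with radius of influence $R$, law $\mathbb{P}$ and survival event $V$. For $n\ge1$ let $$\rho_n=\prod_{k=0}^{n-1}\Big[1-\prod_{i=0}^{k}\mathbb{P}(R<i+1)\Big].$$ If $\lim_{n\to\infty}\sqrt[n]{\rho_n} > e^{-\dim\inf\partial\mathbb{T}_S}$, then $\mathbb{P}(V)>0$.
   Context: Cone percolation process: Let $\mathbb{T}$ be a tree with origin $\mathcal{O}$ and graph distance $d(\cdot,\cdot)$. Write $u\le v$ if $u$ lies on the path from $\mathcal{O}$ to $v$. Let $R$ be a random variable with values in $\{0,1,2,\dots\}$, $p_k=\mathbb{P}(R=k)$, and assume $p_0\in(0,1)$. Let $\{R_v\}$ be i.i.d. copies of $R$ indexed by the vertices. For each vertex $u$ let $B_u=\{v: u\le v,\ d(u,v)\le R_u\}$. Set $I_0=\{\mathcal{O}\}$, $I_{n+1}=\bigcup_{u\in I_n}B_u$, $I=\bigcup_n I_n$; survival is the event $V=\{|I|=\infty\}$. A tree is spherically symmetric if any two vertices at the same distance from $\mathcal{O}$ have the same degree. For a vertex $u$ and $n\ge1$, $M_n(u)=|\{v: u\le v,\ d(v,\mathcal{O})=d(u,\mathcal{O})+n\}|$, and $\dim\inf\partial\mathbb{T}:=\lim_{n\to\infty}\min_{v}\frac1n\ln M_n(v)$, the minimum being over all vertices $v$ (the limits in the statement are assumed to exist). *)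

theory Defs
  imports "HOL-Probability.Probability"
begin

text \<open>A spherically symmetric (locally finite) tree is determined, up to isomorphism,
by the number c k of children of each vertex at distance k from the origin.
Vertices are the paths from the origin: lists xs with xs!i < c i; the origin is [].\<close>

definition ss_verts :: "(nat \<Rightarrow> nat) \<Rightarrow> nat list set" where
  "ss_verts c = {xs. \<forall>i<length xs. xs ! i < c i}"

text \<open>u \<le> v iff u lies on the path from the origin to v, i.e. u is a prefix of v;
the graph distance between comparable vertices is the difference of lengths.\<close>

definition tree_le :: "nat list \<Rightarrow> nat list \<Rightarrow> bool" where
  "tree_le u v \<longleftrightarrow> (\<exists>w. v = u @ w)"

definition Mn :: "(nat \<Rightarrow> nat) \<Rightarrow> nat \<Rightarrow> nat list \<Rightarrow> nat" where
  "Mn c n u = card {v \<in> ss_verts c. tree_le u v \<and> length v = length u + n}"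

definition cone :: "(nat \<Rightarrow> nat) \<Rightarrow> nat list \<Rightarrow> nat \<Rightarrow> nat list set" where
  "cone c u r = {v \<in> ss_verts c. tree_le u v \<and> length v - length u \<le> r}"

fun infected :: "(nat \<Rightarrow> nat) \<Rightarrow> (nat list \<Rightarrow> nat) \<Rightarrow> nat \<Rightarrow> nat list set" where
  "infected c Rv 0 = {[]}"
| "infected c Rv (Suc n) = (\<Union>u\<in>infected c Rv n. cone c u (Rv u))"

definition rho :: "nat pmf \<Rightarrow> nat \<Rightarrow> real" where
  "rho p n = (\<Prod>k<n. 1 - (\<Prod>i\<le>k. measure_pmf.prob p {j. j < i + 1}))"

end

theory Submission
  imports Defs
begin

text \<open>Cut the tree into blocks of n consecutive generations. On a path from the origin, a block is
  covered if each of its vertices lies in the cone of an earlier vertex of the same block; if all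
  blocks on the path to v are covered, the infection reaches v. By Harris' inequality a block is
  covered with probability at least rho n, and blocks made of different vertices are independent.
  So the paths to depth t n whose blocks are all covered form a branching structure with mean
  offspring at least e^(n dim) rho n, which exceeds 1 for large n. The second moment method bounds
  the probability that such a path exists from below uniformly in t, and continuity from above
  turns this into a positive probability of an infinite infected set.\<close>

section \<open>Lists of i.i.d. values\<close>

lemma replicate_pmf_Suc_map:
  "replicate_pmf (Suc n) p = bind_pmf p (\<lambda>x. map_pmf (Cons x) (replicate_pmf n p))"
  by (simp add: map_pmf_def)

lemma replicate_pmf_add_map:
  "replicate_pmf (n + m) p = bind_pmf (replicate_pmf n p) (\<lambda>xs. map_pmf ((@) xs) (replicate_pmf m p))"
  by (simp add: replicate_pmf_distrib map_pmf_def)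

lemma length_of_set_replicate_pmf: "xs \<in> set_pmf (replicate_pmf n p) \<Longrightarrow> length xs = n"
  by (simp add: set_replicate_pmf)

lemma measure_pmf_prob_bind_pmf:
  "measure_pmf.prob (bind_pmf A f) S = measure_pmf.expectation A (\<lambda>x. measure_pmf.prob (f x) S)"
proof -
  have "emeasure (measure_pmf (bind_pmf A f)) S = (\<integral>\<^sup>+x. emeasure (f x) S \<partial>A)"
    by simp
  also have "\<dots> = (\<integral>\<^sup>+x. ennreal (measure_pmf.prob (f x) S) \<partial>A)"
    by (simp add: measure_pmf.emeasure_eq_measure)
  also have "\<dots> = ennreal (measure_pmf.expectation A (\<lambda>x. measure_pmf.prob (f x) S))"
    by (rule nn_integral_eq_integral)
       (auto intro!: measure_pmf.integrable_const_bound[where B=1])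
  finally show ?thesis
    by (simp add: measure_pmf.emeasure_eq_measure integral_nonneg)
qed

lemma measure_pmf_expectation_indicator_mult:
  "measure_pmf.expectation A (\<lambda>x. indicator C x * (k::real)) = measure_pmf.prob A C * k"
  by (simp add: measure_pmf.emeasure_eq_measure)

lemma prob_replicate_pmf_take_drop:
  "measure_pmf.prob (replicate_pmf (n + m) p) {xs. take n xs \<in> A \<and> drop n xs \<in> B}
   = measure_pmf.prob (replicate_pmf n p) A * measure_pmf.prob (replicate_pmf m p) B"
proof -
  have "measure_pmf.prob (replicate_pmf (n + m) p) {xs. take n xs \<in> A \<and> drop n xs \<in> B}
      = measure_pmf.expectation (replicate_pmf n p)
          (\<lambda>xs. measure_pmf.prob (replicate_pmf m p) ((@) xs -` {xs. take n xs \<in> A \<and> drop n xs \<in> B}))"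
    by (simp add: replicate_pmf_add_map measure_pmf_prob_bind_pmf)
  also have "\<dots> = measure_pmf.expectation (replicate_pmf n p)
                    (\<lambda>xs. indicator A xs * measure_pmf.prob (replicate_pmf m p) B)"
    by (rule integral_cong_AE)
       (auto intro!: AE_pmfI simp: length_of_set_replicate_pmf indicator_def)
  finally show ?thesis
    by (simp add: measure_pmf_expectation_indicator_mult)
qed

lemma prob_replicate_pmf_blocks:
  "measure_pmf.prob (replicate_pmf (k * n) p) {xs. \<forall>b<k. take n (drop (b * n) xs) \<in> A}
   = measure_pmf.prob (replicate_pmf n p) A ^ k"
proof (induction k)
  case (Suc k)
  have "{xs. \<forall>b<Suc k. take n (drop (b * n) xs) \<in> A}
      = {xs. take n xs \<in> A \<and> drop n xs \<in> {xs. \<forall>b<k. take n (drop (b * n) xs) \<in> A}}"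
    by (auto simp: less_Suc_eq_0_disj add.commute)
  then show ?case
    using Suc prob_replicate_pmf_take_drop[of n "k * n" p A "{xs. \<forall>b<k. take n (drop (b * n) xs) \<in> A}"]
    by (simp del: replicate_pmf.simps)
qed simp

lemma prob_replicate_pmf_box:
  "measure_pmf.prob (replicate_pmf n p) {xs. \<forall>j<n. xs ! j \<in> A j} = (\<Prod>j<n. measure_pmf.prob p (A j))"
proof (induction n arbitrary: A)
  case (Suc n)
  have cons: "Cons x -` {xs. \<forall>j<Suc n. xs ! j \<in> A j}
      = (if x \<in> A 0 then {xs. \<forall>j<n. xs ! j \<in> A (Suc j)} else {})" for x
    by (auto simp: All_less_Suc2)
  have "measure_pmf.prob (replicate_pmf (Suc n) p) {xs. \<forall>j<Suc n. xs ! j \<in> A j}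
      = measure_pmf.expectation p
          (\<lambda>x. indicator (A 0) x * measure_pmf.prob (replicate_pmf n p) {xs. \<forall>j<n. xs ! j \<in> A (Suc j)})"
    unfolding replicate_pmf_Suc_map measure_pmf_prob_bind_pmf measure_map_pmf cons
    by (rule Bochner_Integration.integral_cong) (simp_all add: indicator_def)
  also have "\<dots> = measure_pmf.prob p (A 0) * (\<Prod>j<n. measure_pmf.prob p (A (Suc j)))"
    by (simp add: measure_pmf_expectation_indicator_mult Suc)
  finally show ?case
    by (simp only: prod.lessThan_Suc_shift)
qed simp

lemma pmf_replicate_pmf_Cons:
  "pmf (replicate_pmf (Suc n) p) (x # xs) = pmf p x * pmf (replicate_pmf n p) xs"
proof -
  have "pmf (map_pmf (Cons y) (replicate_pmf n p)) (x # xs) = indicator {x} y * pmf (replicate_pmf n p) xs"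
    for y
    by (cases "y = x") (simp add: pmf_map_inj', subst pmf_map_outside, auto)
  then show ?thesis
    by (simp add: replicate_pmf_Suc_map pmf_bind measure_pmf_expectation_indicator_mult
                  measure_pmf_single del: replicate_pmf.simps)
qed

section \<open>Harris' inequality\<close>

lemma Chebyshev_sum_inequality_pmf:
  fixes F G :: "'a::wellorder \<Rightarrow> real"
  assumes F: "mono F" and G: "mono G"
    and F01: "\<And>x. 0 \<le> F x \<and> F x \<le> 1" and G01: "\<And>x. 0 \<le> G x \<and> G x \<le> 1"
  shows "measure_pmf.expectation q F * measure_pmf.expectation q G
         \<le> measure_pmf.expectation q (\<lambda>x. F x * G x)"
proof -
  define a where "a = measure_pmf.expectation q F"
  \<comment> \<open>Since F is monotone, F x - a changes sign only once; a threshold c for G at that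
      point makes (F x - a) * (G x - c) nonnegative everywhere.\<close>
  obtain c where c: "\<And>x. 0 \<le> (F x - a) * (G x - c)"
  proof (cases "\<exists>x. a \<le> F x")
    case True
    define x0 where "x0 = (LEAST x. a \<le> F x)"
    have x0: "a \<le> F x0" unfolding x0_def using True by (metis LeastI)
    show ?thesis
    proof (rule that[of "G x0"])
      fix x
      show "0 \<le> (F x - a) * (G x - G x0)"
      proof (cases "x0 \<le> x")
        case True
        then show ?thesis using monoD[OF F True] monoD[OF G True] x0 by auto
      next
        case False
        then have "x \<le> x0" "\<not> a \<le> F x"
          using not_less_Least[of x "\<lambda>x. a \<le> F x"] unfolding x0_def by auto
        then show ?thesis using monoD[OF G \<open>x \<le> x0\<close>] by (intro mult_nonpos_nonpos) auto
      qed
    qed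
  next
    case False
    show ?thesis
      by (rule that[of 1], rule mult_nonpos_nonpos) (use False G01 in \<open>auto simp: not_le less_imp_le\<close>)
  qed
  have int: "integrable q H" if "\<And>x. 0 \<le> H x \<and> H x \<le> 1" for H :: "'a \<Rightarrow> real"
    by (rule measure_pmf.integrable_const_bound[where B=1]) (use that in auto)
  have intFG: "integrable q (\<lambda>x. F x * G x)"
    by (rule int) (use F01 G01 in \<open>auto intro: mult_le_one\<close>)
  have "0 \<le> measure_pmf.expectation q (\<lambda>x. (F x - a) * (G x - c))"
    by (rule integral_nonneg_AE) (simp add: c)
  also have "(\<lambda>x. (F x - a) * (G x - c)) = (\<lambda>x. F x * G x - c * F x - a * G x + a * c)"
    by (auto simp: algebra_simps)
  also have "measure_pmf.expectation q \<dots> = measure_pmf.expectation q (\<lambda>x. F x * G x)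
      - c * a - a * measure_pmf.expectation q G + a * c"
    using int[OF F01] int[OF G01] intFG by (simp add: a_def)
  finally show ?thesis by (simp add: a_def)
qed

definition upward_closed :: "'a::order list set \<Rightarrow> bool" where
  "upward_closed A \<longleftrightarrow> (\<forall>xs ys. xs \<in> A \<longrightarrow> length ys = length xs \<longrightarrow>
                          (\<forall>i<length xs. xs ! i \<le> ys ! i) \<longrightarrow> ys \<in> A)"

lemma upward_closedD:
  "upward_closed A \<Longrightarrow> xs \<in> A \<Longrightarrow> length ys = length xs \<Longrightarrow> (\<And>i. i < length xs \<Longrightarrow> xs ! i \<le> ys ! i)
   \<Longrightarrow> ys \<in> A"
  unfolding upward_closed_def by blast

lemma upward_closed_Cons_mono:
  assumes "upward_closed A" "x # xs \<in> A" "x \<le> y"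
  shows "y # xs \<in> A"
  by (rule upward_closedD[OF assms(1,2)]) (use assms(3) in \<open>auto simp: nth_Cons split: nat.splits\<close>)

lemma upward_closed_vimage_Cons: "upward_closed A \<Longrightarrow> upward_closed (Cons x -` A)"
  unfolding upward_closed_def by (auto simp: nth_Cons split: nat.splits)

lemma upward_closed_INT: "(\<And>k. k \<in> K \<Longrightarrow> upward_closed (A k)) \<Longrightarrow> upward_closed (\<Inter>k\<in>K. A k)"
  unfolding upward_closed_def by blast

text \<open>Condition on the first coordinate: both conditional probabilities are monotone in it, so
  Chebyshev's sum inequality reduces the claim to the induction hypothesis.\<close>

lemma Harris_inequality:
  fixes p :: "'a::wellorder pmf"
  assumes "upward_closed A" "upward_closed B"
  shows "measure_pmf.prob (replicate_pmf n p) A * measure_pmf.prob (replicate_pmf n p) B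
         \<le> measure_pmf.prob (replicate_pmf n p) (A \<inter> B)"
  using assms
proof (induction n arbitrary: A B)
  case 0
  then show ?case by (simp add: indicator_def)
next
  case (Suc n)
  define F where "F = (\<lambda>x. measure_pmf.prob (replicate_pmf n p) (Cons x -` A))"
  define G where "G = (\<lambda>x. measure_pmf.prob (replicate_pmf n p) (Cons x -` B))"
  have mono: "mono (\<lambda>x. measure_pmf.prob (replicate_pmf n p) (Cons x -` C))" if "upward_closed C" for C
    by (rule monoI, rule measure_pmf.finite_measure_mono)
       (use upward_closed_Cons_mono[OF that] in auto)
  have "measure_pmf.prob (replicate_pmf (Suc n) p) A * measure_pmf.prob (replicate_pmf (Suc n) p) B
      = measure_pmf.expectation p F * measure_pmf.expectation p G"
    by (simp add: replicate_pmf_Suc_map measure_pmf_prob_bind_pmf F_def G_def del: replicate_pmf.simps)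
  also have "\<dots> \<le> measure_pmf.expectation p (\<lambda>x. F x * G x)"
    unfolding F_def G_def by (rule Chebyshev_sum_inequality_pmf) (use mono Suc.prems in auto)
  also have "\<dots> \<le> measure_pmf.expectation p (\<lambda>x. measure_pmf.prob (replicate_pmf n p) (Cons x -` (A \<inter> B)))"
  proof (rule integral_mono)
    show "integrable (measure_pmf p) (\<lambda>x. F x * G x)"
      by (rule measure_pmf.integrable_const_bound[where B=1])
         (auto simp: F_def G_def abs_mult intro!: mult_le_one)
    show "integrable (measure_pmf p) (\<lambda>x. measure_pmf.prob (replicate_pmf n p) (Cons x -` (A \<inter> B)))"
      by (rule measure_pmf.integrable_const_bound[where B=1]) auto
    show "F x * G x \<le> measure_pmf.prob (replicate_pmf n p) (Cons x -` (A \<inter> B))" for x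
      unfolding F_def G_def vimage_Int
      by (rule Suc.IH) (use upward_closed_vimage_Cons Suc.prems in auto)
  qed
  also have "\<dots> = measure_pmf.prob (replicate_pmf (Suc n) p) (A \<inter> B)"
    by (simp add: replicate_pmf_Suc_map measure_pmf_prob_bind_pmf del: replicate_pmf.simps)
  finally show ?case .
qed

lemma Harris_inequality_prod:
  fixes p :: "'a::wellorder pmf" and m :: nat
  assumes "\<And>k. k < m \<Longrightarrow> upward_closed (A k)"
  shows "(\<Prod>k<m. measure_pmf.prob (replicate_pmf n p) (A k))
         \<le> measure_pmf.prob (replicate_pmf n p) (\<Inter>k<m. A k)"
  using assms
proof (induction m)
  case (Suc m)
  have "(\<Prod>k<Suc m. measure_pmf.prob (replicate_pmf n p) (A k))
      \<le> measure_pmf.prob (replicate_pmf n p) (\<Inter>k<m. A k) * measure_pmf.prob (replicate_pmf n p) (A m)"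
    using Suc by (auto intro!: mult_right_mono)
  also have "\<dots> \<le> measure_pmf.prob (replicate_pmf n p) ((\<Inter>k<m. A k) \<inter> A m)"
    by (rule Harris_inequality) (use Suc.prems in \<open>auto intro: upward_closed_INT\<close>)
  also have "(\<Inter>k<m. A k) \<inter> A m = (\<Inter>k<Suc m. A k)"
    by (auto simp: lessThan_Suc)
  finally show ?case .
qed simp

section \<open>Covered blocks\<close>

text \<open>Radii rs of consecutive vertices 0, 1, ... of a path: vertex k lies in the cone of an
  earlier vertex j of the path.\<close>

definition covered_at :: "nat \<Rightarrow> nat list set" where
  "covered_at k = {rs. \<exists>j\<le>k. j < length rs \<and> k < j + rs ! j}"

definition covers :: "nat list \<Rightarrow> bool" where
  "covers rs \<longleftrightarrow> (\<forall>k<length rs. rs \<in> covered_at k)"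

definition cover_prob :: "nat pmf \<Rightarrow> nat \<Rightarrow> real" where
  "cover_prob p n = measure_pmf.prob (replicate_pmf n p) {rs. covers rs}"

lemma upward_closed_covered_at: "upward_closed (covered_at k)"
  unfolding upward_closed_def covered_at_def by (fastforce intro: less_le_trans)

lemma prob_covered_at:
  assumes "k < n"
  shows "measure_pmf.prob (replicate_pmf n p) (covered_at k) = 1 - (\<Prod>i\<le>k. measure_pmf.prob p {j. j < i + 1})"
proof -
  \<comment> \<open>S j: the radii with which vertex j does not reach vertex k.\<close>
  define S where "S j = (if j \<le> k then {..k - j} else UNIV)" for j
  have "rs \<in> covered_at k \<longleftrightarrow> rs \<notin> {rs. \<forall>j<n. rs ! j \<in> S j}" if "length rs = n" for rs
  proof -
    have "rs \<in> covered_at k \<longleftrightarrow> (\<exists>j<n. j \<le> k \<and> \<not> rs ! j \<le> k - j)"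
      using that assms unfolding covered_at_def by (auto simp: not_le)
    then show ?thesis by (auto simp: S_def)
  qed
  then have compl: "covered_at k \<inter> set_pmf (replicate_pmf n p)
                  = (UNIV - {rs. \<forall>j<n. rs ! j \<in> S j}) \<inter> set_pmf (replicate_pmf n p)"
    by (auto simp: set_replicate_pmf)
  have "measure_pmf.prob (replicate_pmf n p) (covered_at k)
      = measure_pmf.prob (replicate_pmf n p) (UNIV - {rs. \<forall>j<n. rs ! j \<in> S j})"
    using measure_Int_set_pmf[of "replicate_pmf n p" "covered_at k"] compl
          measure_Int_set_pmf[of "replicate_pmf n p" "UNIV - {rs. \<forall>j<n. rs ! j \<in> S j}"]
    by simp
  also have "\<dots> = 1 - (\<Prod>j<n. measure_pmf.prob p (S j))"
    using measure_pmf.prob_compl[of "{rs. \<forall>j<n. rs ! j \<in> S j}" "replicate_pmf n p"]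
    by (simp add: prob_replicate_pmf_box)
  also have "(\<Prod>j<n. measure_pmf.prob p (S j)) = (\<Prod>j\<le>k. measure_pmf.prob p (S j))"
    using assms by (intro prod.mono_neutral_right) (auto simp: S_def)
  also have "\<dots> = (\<Prod>i\<le>k. measure_pmf.prob p {j. j < i + 1})"
    by (rule prod.reindex_bij_witness[where i="\<lambda>i. k - i" and j="\<lambda>j. k - j"])
       (auto simp: S_def lessThan_def lessThan_Suc_atMost[symmetric])
  finally show ?thesis .
qed

lemma rho_le_cover_prob: "rho p n \<le> cover_prob p n"
proof -
  have "rho p n = (\<Prod>k<n. measure_pmf.prob (replicate_pmf n p) (covered_at k))"
    unfolding rho_def by (intro prod.cong) (auto simp: prob_covered_at)
  also have "\<dots> \<le> measure_pmf.prob (replicate_pmf n p) (\<Inter>k<n. covered_at k)"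
    by (rule Harris_inequality_prod) (simp add: upward_closed_covered_at)
  also have "\<dots> = measure_pmf.prob (replicate_pmf n p) ((\<Inter>k<n. covered_at k) \<inter> set_pmf (replicate_pmf n p))"
    by (simp add: measure_Int_set_pmf)
  also have "\<dots> \<le> cover_prob p n"
    unfolding cover_prob_def
    by (rule measure_pmf.finite_measure_mono) (auto simp: covers_def dest: length_of_set_replicate_pmf)
  finally show ?thesis .
qed

lemma rho_nonneg: "0 \<le> rho p n"
  unfolding rho_def by (intro prod_nonneg) (auto intro: prod_le_1)

lemma rho_le_1: "rho p n \<le> 1"
  unfolding rho_def by (intro prod_le_1) (auto intro: prod_le_1 prod_nonneg)

section \<open>Independent radii\<close>

lemma measurable_map_list:
  fixes f :: "'i \<Rightarrow> 'a \<Rightarrow> 'b::countable"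
  assumes "\<And>i. i \<in> set ks \<Longrightarrow> f i \<in> measurable N (count_space UNIV)"
  shows "(\<lambda>x. map (\<lambda>i. f i x) ks) \<in> measurable N (count_space UNIV)"
  using assms
proof (induction ks)
  case (Cons i ks)
  have "(\<lambda>x. (f i x, map (\<lambda>i. f i x) ks)) \<in> measurable N (count_space UNIV \<Otimes>\<^sub>M count_space UNIV)"
    using Cons by (intro measurable_Pair) auto
  moreover have "(\<lambda>(y, l). y # l) \<in> measurable (count_space UNIV \<Otimes>\<^sub>M count_space UNIV) (count_space (UNIV :: 'b list set))"
    by (simp add: pair_measure_countable)
  ultimately show ?case
    using measurable_compose by fastforce
qed simp

lemma length_concat_const: "(\<forall>xs\<in>set xss. length xs = n) \<Longrightarrow> length (concat xss) = length xss * n"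
  by (induction xss) auto

lemma take_drop_concat_const:
  "(\<forall>xs\<in>set xss. length xs = n) \<Longrightarrow> q < length xss \<Longrightarrow> take n (drop (q * n) (concat xss)) = xss ! q"
proof (induction xss arbitrary: q)
  case (Cons xs xss)
  then show ?case
    by (cases q) (simp_all add: add.commute)
qed simp

locale iid_radii = prob_space M
  for M :: "'a measure" +
  fixes V :: "'v set" and X :: "'v \<Rightarrow> 'a \<Rightarrow> nat" and p :: "nat pmf"
  assumes measurable_X: "\<forall>v\<in>V. X v \<in> measurable M (count_space UNIV)"
    and indep_X: "indep_vars (\<lambda>_. count_space UNIV) X V"
    and distr_X: "\<forall>v\<in>V. distr M (count_space UNIV) (X v) = measure_pmf p"
begin

lemma measurable_radii: "set vs \<subseteq> V \<Longrightarrow> (\<lambda>\<omega>. map (\<lambda>v. X v \<omega>) vs) \<in> measurable M (count_space UNIV)"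
  by (rule measurable_map_list) (use measurable_X in auto)

lemma pred_radii: "set vs \<subseteq> V \<Longrightarrow> Measurable.pred M (\<lambda>\<omega>. P (map (\<lambda>v. X v \<omega>) vs))"
  using measurable_compose[OF measurable_radii measurable_count_space] by blast

lemma prob_radius_singleton: "v \<in> V \<Longrightarrow> prob (X v -` {x} \<inter> space M) = pmf p x"
  using measurable_X distr_X by (subst measure_distr[symmetric]) (auto simp: measure_pmf_single)

lemma prob_radii_singleton:
  "distinct vs \<Longrightarrow> set vs \<subseteq> V
   \<Longrightarrow> prob ((\<lambda>\<omega>. map (\<lambda>v. X v \<omega>) vs) -` {rs} \<inter> space M) = pmf (replicate_pmf (length vs) p) rs"
proof (induction vs arbitrary: rs)
  case Nil
  then show ?case by (auto simp: indicator_def prob_space)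
next
  case (Cons v vs)
  have map_measurable:
    "(\<lambda>f::'v \<Rightarrow> nat. map f us) \<in> measurable (PiM (set us) (\<lambda>_. count_space UNIV)) (count_space UNIV)"
    for us :: "'v list"
    using measurable_map_list[where f="\<lambda>i (f::'v \<Rightarrow> nat). f i" and ks=us
                                and N="PiM (set us) (\<lambda>_. count_space UNIV)"]
    by (simp add: measurable_component_singleton)
  have "indep_var (PiM {v} (\<lambda>_. count_space UNIV)) (\<lambda>\<omega>. restrict (\<lambda>i. X i \<omega>) {v})
                  (PiM (set vs) (\<lambda>_. count_space UNIV)) (\<lambda>\<omega>. restrict (\<lambda>i. X i \<omega>) (set vs))"
    using Cons.prems by (intro indep_var_restrict[OF indep_X]) auto
  moreover have "(\<lambda>f::'v \<Rightarrow> nat. [f v]) \<in> measurable (PiM {v} (\<lambda>_. count_space UNIV)) (count_space UNIV)"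
    using map_measurable[of "[v]"] by simp
  ultimately
  have "indep_var (count_space UNIV) ((\<lambda>f. [f v]) \<circ> (\<lambda>\<omega>. restrict (\<lambda>i. X i \<omega>) {v}))
                  (count_space UNIV) ((\<lambda>f. map f vs) \<circ> (\<lambda>\<omega>. restrict (\<lambda>i. X i \<omega>) (set vs)))"
    using map_measurable[of vs] by (intro indep_var_compose)
  moreover have "(\<lambda>f. [f v]) \<circ> (\<lambda>\<omega>. restrict (\<lambda>i. X i \<omega>) {v}) = (\<lambda>\<omega>. [X v \<omega>])"
    "(\<lambda>f. map f vs) \<circ> (\<lambda>\<omega>. restrict (\<lambda>i. X i \<omega>) (set vs)) = (\<lambda>\<omega>. map (\<lambda>v. X v \<omega>) vs)"
    by (auto simp: fun_eq_iff)
  ultimately have indep: "indep_var (count_space UNIV) (\<lambda>\<omega>. [X v \<omega>])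
                              (count_space UNIV) (\<lambda>\<omega>. map (\<lambda>v. X v \<omega>) vs)"
    by simp
  show ?case
  proof (cases rs)
    case Nil
    then show ?thesis
      by (simp add: vimage_def pmf_eq_0_set_pmf set_replicate_pmf del: replicate_pmf.simps)
  next
    case (Cons r rs')
    have "(\<lambda>\<omega>. map (\<lambda>v. X v \<omega>) (v # vs)) -` {rs} \<inter> space M
        = (\<lambda>\<omega>. ([X v \<omega>], map (\<lambda>v. X v \<omega>) vs)) -` ({[r]} \<times> {rs'}) \<inter> space M"
      using Cons by auto
    moreover have "(\<lambda>\<omega>. [X v \<omega>]) -` {[r]} \<inter> space M = X v -` {r} \<inter> space M" by auto
    ultimately have "prob ((\<lambda>\<omega>. map (\<lambda>v. X v \<omega>) (v # vs)) -` {rs} \<inter> space M)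
        = prob (X v -` {r} \<inter> space M) * prob ((\<lambda>\<omega>. map (\<lambda>v. X v \<omega>) vs) -` {rs'} \<inter> space M)"
      using indep_varD[OF indep, of "{[r]}" "{rs'}"] by simp
    then show ?thesis
      using Cons.prems Cons.IH[of rs'] prob_radius_singleton[of v r] \<open>rs = r # rs'\<close>
      by (simp add: pmf_replicate_pmf_Cons del: replicate_pmf.simps)
  qed
qed

lemma distr_radii:
  assumes "distinct vs" "set vs \<subseteq> V"
  shows "distr M (count_space UNIV) (\<lambda>\<omega>. map (\<lambda>v. X v \<omega>) vs) = measure_pmf (replicate_pmf (length vs) p)"
proof (rule measure_eqI_countable[where A=UNIV])
  fix rs :: "nat list"
  show "emeasure (distr M (count_space UNIV) (\<lambda>\<omega>. map (\<lambda>v. X v \<omega>) vs)) {rs}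
      = emeasure (measure_pmf (replicate_pmf (length vs) p)) {rs}"
    using measurable_radii[OF assms(2)] prob_radii_singleton[OF assms, of rs]
    by (simp add: emeasure_distr emeasure_eq_measure emeasure_pmf_single)
qed auto

lemma prob_radii_in:
  assumes "distinct vs" "set vs \<subseteq> V"
  shows "prob {\<omega> \<in> space M. map (\<lambda>v. X v \<omega>) vs \<in> S} = measure_pmf.prob (replicate_pmf (length vs) p) S"
proof -
  have "prob {\<omega> \<in> space M. map (\<lambda>v. X v \<omega>) vs \<in> S}
      = measure (distr M (count_space UNIV) (\<lambda>\<omega>. map (\<lambda>v. X v \<omega>) vs)) S"
    using measurable_radii[OF assms(2)]
    by (subst measure_distr) (auto simp: vimage_def Int_def conj_commute)
  then show ?thesis using distr_radii[OF assms] by simp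
qed

lemma prob_blocks_covered:
  assumes "\<forall>vs\<in>set vss. length vs = n" "distinct (concat vss)" "set (concat vss) \<subseteq> V"
  shows "prob {\<omega> \<in> space M. \<forall>q<length vss. covers (map (\<lambda>v. X v \<omega>) (vss ! q))}
         = cover_prob p n ^ length vss"
proof -
  have block: "map (\<lambda>v. X v \<omega>) (vss ! q) = take n (drop (q * n) (map (\<lambda>v. X v \<omega>) (concat vss)))"
    if "q < length vss" for q \<omega>
    using take_drop_concat_const[of "map (map (\<lambda>v. X v \<omega>)) vss" n q] assms(1) that
    by (simp add: map_concat)
  have "prob {\<omega> \<in> space M. \<forall>q<length vss. covers (map (\<lambda>v. X v \<omega>) (vss ! q))}
      = prob {\<omega> \<in> space M. map (\<lambda>v. X v \<omega>) (concat vss)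
                             \<in> {rs. \<forall>q<length vss. take n (drop (q * n) rs) \<in> {rs. covers rs}}}"
    by (simp add: block)
  also have "\<dots> = measure_pmf.prob (replicate_pmf (length vss * n) p)
                    {rs. \<forall>q<length vss. take n (drop (q * n) rs) \<in> {rs. covers rs}}"
    using prob_radii_in[OF assms(2,3), of "{rs. \<forall>q<length vss. take n (drop (q * n) rs) \<in> {rs. covers rs}}"]
    by (simp add: length_concat_const[OF assms(1)])
  also have "\<dots> = cover_prob p n ^ length vss"
    using prob_replicate_pmf_blocks[of "length vss" n p "{rs. covers rs}"] by (simp add: cover_prob_def)
  finally show ?thesis .
qed

end

section \<open>Infection along a path\<close>

lemma take_in_ss_verts: "v \<in> ss_verts c \<Longrightarrow> take i v \<in> ss_verts c"
  by (auto simp: ss_verts_def)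

lemma infected_subset_ss_verts: "infected c Rv m \<subseteq> ss_verts c"
  by (induction m) (auto simp: ss_verts_def cone_def)

lemma infected_mono: "m \<le> m' \<Longrightarrow> infected c Rv m \<subseteq> infected c Rv m'"
proof (induction m' rule: dec_induct)
  case (step m')
  have "u \<in> cone c u (Rv u)" if "u \<in> infected c Rv m'" for u
    using that infected_subset_ss_verts by (auto simp: cone_def tree_le_def)
  then show ?case using step by fastforce
qed simp

text \<open>The vertices on the path to v are the prefixes of v; this is its b-th block of n of them.\<close>

definition path_block :: "nat \<Rightarrow> nat list \<Rightarrow> nat \<Rightarrow> nat list list" where
  "path_block n v b = map (\<lambda>i. take i v) [b * n..<b * n + n]"

lemma length_path_block [simp]: "length (path_block n v b) = n"
  by (simp add: path_block_def)

lemma nth_path_block: "j < n \<Longrightarrow> path_block n v b ! j = take (b * n + j) v"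
  by (simp add: path_block_def)

lemma prefix_infected_if_blocks_covered:
  assumes v: "v \<in> ss_verts c" "length v = t * n"
    and covered: "\<forall>b<t. covers (map Rv (path_block n v b))"
  shows "i \<le> t * n \<Longrightarrow> take i v \<in> infected c Rv i"
proof (induction i rule: less_induct)
  case (less i)
  show ?case
  proof (cases i)
    case (Suc i0)
    have "0 < n" using less.prems Suc by (cases n) auto
    define b where "b = i0 div n"
    define k where "k = i0 mod n"
    have i0: "i0 = b * n + k" and "k < n" using \<open>0 < n\<close> by (simp_all add: b_def k_def)
    have "b < t"
    proof (rule ccontr)
      assume "\<not> b < t"
      then have "t * n \<le> b * n" by simp
      then show False using less.prems Suc i0 by linarith
    qed
    then obtain j where j: "j \<le> k" "k < j + Rv (take (b * n + j) v)"
      using covered \<open>k < n\<close> by (force simp: covers_def covered_at_def nth_path_block)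
    define u where "u = take (b * n + j) v"
    have "u \<in> infected c Rv (b * n + j)"
      unfolding u_def using less.prems Suc i0 j by (intro less.IH) auto
    then have "u \<in> infected c Rv i0"
      using infected_mono[of "b * n + j" i0 c Rv] i0 j by auto
    moreover have "take i v \<in> cone c u (Rv u)"
    proof -
      have "take (b * n + j) (take i v) = u"
        using Suc i0 j by (simp add: u_def min_def)
      then have "take i v = u @ drop (b * n + j) (take i v)"
        by (metis append_take_drop_id)
      moreover have "length (take i v) - length u \<le> Rv u"
        using less.prems Suc i0 j v(2) by (simp add: u_def)
      ultimately show ?thesis using take_in_ss_verts[OF v(1)] by (auto simp: cone_def tree_le_def)
    qed
    ultimately show ?thesis using Suc by auto
  qed simp
qed

lemma infinite_infected_if_blocks_covered:
  assumes "0 < n"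
    and paths: "\<And>t. \<exists>v\<in>ss_verts c. length v = t * n \<and> (\<forall>b<t. covers (map Rv (path_block n v b)))"
  shows "infinite (\<Union>m. infected c Rv m)"
proof
  assume fin: "finite (\<Union>m. infected c Rv m)"
  define B where "B = Max (length ` (\<Union>m. infected c Rv m))"
  obtain v where v: "v \<in> ss_verts c" "length v = Suc B * n" "\<forall>b<Suc B. covers (map Rv (path_block n v b))"
    using paths by blast
  have "v \<in> infected c Rv (Suc B * n)"
    using prefix_infected_if_blocks_covered[OF v, of "Suc B * n"] v(2) by simp
  then have "length v \<le> B"
    unfolding B_def using fin by (intro Max_ge) auto
  moreover have "Suc B \<le> Suc B * n" using \<open>0 < n\<close> mult_le_mono2[of 1 n "Suc B"] by simp
  ultimately show False using v(2) by linarith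
qed

section \<open>Counting vertices\<close>

lemma prod_lessThan_add_shift: "(\<Prod>i<(a::nat) + b. f i) = (\<Prod>i<a. f i) * (\<Prod>j<b. f (a + j))"
  by (induction b) (simp_all add: ac_simps)

definition bounded_lists :: "(nat \<Rightarrow> nat) \<Rightarrow> nat \<Rightarrow> nat list set" where
  "bounded_lists f l = {xs. length xs = l \<and> (\<forall>i<l. xs ! i < f i)}"

lemma bounded_lists_Suc:
  "bounded_lists f (Suc l) = (\<lambda>(xs, x). xs @ [x]) ` (bounded_lists f l \<times> {..<f l})"
proof (intro equalityI subsetI)
  fix ys assume "ys \<in> bounded_lists f (Suc l)"
  then have ys: "length ys = Suc l" "\<forall>i<Suc l. ys ! i < f i" by (auto simp: bounded_lists_def)
  have "ys \<noteq> []" using ys(1) by auto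
  then have "ys = butlast ys @ [last ys]" by simp
  moreover have "butlast ys \<in> bounded_lists f l"
    using ys by (auto simp: bounded_lists_def nth_butlast)
  moreover have "last ys < f l"
    using last_conv_nth[OF \<open>ys \<noteq> []\<close>] ys by simp
  ultimately show "ys \<in> (\<lambda>(xs, x). xs @ [x]) ` (bounded_lists f l \<times> {..<f l})"
    by (intro image_eqI[of _ _ "(butlast ys, last ys)"]) auto
qed (auto simp: bounded_lists_def nth_append less_Suc_eq)

lemma finite_card_bounded_lists:
  "finite (bounded_lists f l) \<and> card (bounded_lists f l) = (\<Prod>i<l. f i)"
proof (induction l)
  case 0
  have "bounded_lists f 0 = {[]}" by (auto simp: bounded_lists_def)
  then show ?case by simp
next
  case (Suc l)
  have "inj_on (\<lambda>(xs, x). xs @ [x]) (bounded_lists f l \<times> {..<f l})"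
    by (auto simp: inj_on_def)
  then show ?case unfolding bounded_lists_Suc using Suc
    by (simp add: card_image card_cartesian_product)
qed

definition level :: "(nat \<Rightarrow> nat) \<Rightarrow> nat \<Rightarrow> nat list set" where
  "level c l = {v \<in> ss_verts c. length v = l}"

lemma level_eq_bounded_lists: "level c l = bounded_lists c l"
  by (auto simp: level_def ss_verts_def bounded_lists_def)

lemma finite_level: "finite (level c l)"
  and card_level: "card (level c l) = (\<Prod>i<l. c i)"
  using finite_card_bounded_lists[of c l] by (simp_all add: level_eq_bounded_lists)

lemma descendants_eq:
  assumes "u \<in> ss_verts c" "length u = a"
  shows "{w \<in> ss_verts c. length w = a + b \<and> take a w = u} = (@) u ` bounded_lists (\<lambda>j. c (a + j)) b"
proof (intro equalityI subsetI)
  fix w assume w: "w \<in> {w \<in> ss_verts c. length w = a + b \<and> take a w = u}"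
  then have "w = u @ drop a w" "drop a w \<in> bounded_lists (\<lambda>j. c (a + j)) b"
    by (auto simp: bounded_lists_def ss_verts_def)
  then show "w \<in> (@) u ` bounded_lists (\<lambda>j. c (a + j)) b" by blast
next
  fix w assume "w \<in> (@) u ` bounded_lists (\<lambda>j. c (a + j)) b"
  then obtain z where z: "w = u @ z" "length z = b" "\<forall>i<b. z ! i < c (a + i)"
    by (auto simp: bounded_lists_def)
  have "w ! i < c i" if "i < length w" for i
  proof (cases "i < a")
    case False
    then show ?thesis using that z assms z(3)[rule_format, of "i - a"] by (simp add: nth_append)
  qed (use z assms in \<open>auto simp: nth_append ss_verts_def\<close>)
  then show "w \<in> {w \<in> ss_verts c. length w = a + b \<and> take a w = u}"
    using z assms by (auto simp: ss_verts_def)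
qed

lemma card_descendants:
  assumes "u \<in> ss_verts c" "length u = a"
  shows "card {w \<in> ss_verts c. length w = a + b \<and> take a w = u} = (\<Prod>j<b. c (a + j))"
proof -
  have "inj_on ((@) u) (bounded_lists (\<lambda>j. c (a + j)) b)" by (auto simp: inj_on_def)
  then show ?thesis
    unfolding descendants_eq[OF assms] using finite_card_bounded_lists by (simp add: card_image)
qed

lemma Mn_eq: "u \<in> ss_verts c \<Longrightarrow> Mn c n u = (\<Prod>j<n. c (length u + j))"
proof -
  assume u: "u \<in> ss_verts c"
  have "{v \<in> ss_verts c. tree_le u v \<and> length v = length u + n}
      = {w \<in> ss_verts c. length w = length u + n \<and> take (length u) w = u}"
    by (auto simp: tree_le_def) (metis append_take_drop_id)
  then show ?thesis unfolding Mn_def using card_descendants[OF u refl] by simp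
qed

section \<open>The second moment argument\<close>

lemma (in prob_space) second_moment_method:
  fixes E :: "'i \<Rightarrow> 'a set"
  assumes F: "finite F" and E: "\<And>v. v \<in> F \<Longrightarrow> E v \<in> events"
    and pos: "0 < (\<Sum>v\<in>F. prob (E v))"
  shows "(\<Sum>v\<in>F. prob (E v))^2 \<le> prob (\<Union>v\<in>F. E v) * (\<Sum>v\<in>F. \<Sum>w\<in>F. prob (E v \<inter> E w))"
proof -
  define S1 where "S1 = (\<Sum>v\<in>F. prob (E v))"
  define S2 where "S2 = (\<Sum>v\<in>F. \<Sum>w\<in>F. prob (E v \<inter> E w))"
  define U where "U = (\<Union>v\<in>F. E v)"
  have U: "U \<in> events" unfolding U_def using F E by auto
  have PU: "0 < prob U"
  proof (rule ccontr)
    assume "\<not> 0 < prob U"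
    then have "prob U = 0" using measure_nonneg[of M U] by simp
    then have "prob (E v) = 0" if "v \<in> F" for v
      using finite_measure_mono[of "E v" U] U that measure_nonneg[of M "E v"] by (auto simp: U_def)
    then show False using pos by simp
  qed
  \<comment> \<open>Expand E[(W - a 1_U)^2] \<ge> 0 with W the number of events that occur and a = S1 / P(U).\<close>
  define a where "a = S1 / prob U"
  define W where "W x = (\<Sum>v\<in>F. indicator (E v) x :: real)" for x
  have square: "(W x - a * indicator U x)^2
      = (\<Sum>v\<in>F. \<Sum>w\<in>F. indicator (E v \<inter> E w) x) - 2 * a * (\<Sum>v\<in>F. indicator (E v) x) + a^2 * indicator U x"
    for x
  proof (cases "x \<in> U")
    case True
    have "(\<Sum>v\<in>F. \<Sum>w\<in>F. indicator (E v \<inter> E w) x :: real) = W x * W x"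
      unfolding W_def sum_product by (simp add: indicator_inter_arith)
    then show ?thesis using True by (simp add: W_def power2_eq_square algebra_simps)
  next
    case False
    then have "x \<notin> E v" if "v \<in> F" for v using that by (auto simp: U_def)
    then show ?thesis using False by (simp add: W_def indicator_def)
  qed
  have integrable_indicator: "integrable M (indicator A :: 'a \<Rightarrow> real)" if "A \<in> events" for A
    using that by (intro integrable_real_indicator) (auto simp: emeasure_eq_measure)
  have "0 \<le> expectation (\<lambda>x. (W x - a * indicator U x)^2)"
    by (rule integral_nonneg_AE) simp
  also have "\<dots> = S2 - 2 * a * S1 + a^2 * prob U"
    unfolding square using F E U
    by (simp add: S1_def S2_def integrable_indicator integrable_sum Bochner_Integration.integral_sum
                  Bochner_Integration.integral_diff Bochner_Integration.integral_add)
  also have "\<dots> = S2 - S1^2 / prob U"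
    using PU by (simp add: a_def power2_eq_square field_simps)
  finally have "S1^2 \<le> S2 * prob U" using PU by (simp add: divide_le_eq)
  then show ?thesis by (simp add: S1_def S2_def U_def mult.commute)
qed

lemma infinite_iff_to_nat_unbounded:
  "infinite (S :: 'a::countable set) \<longleftrightarrow> (\<forall>N. \<exists>v\<in>S. N \<le> to_nat v)"
proof
  assume "infinite S"
  show "\<forall>N. \<exists>v\<in>S. N \<le> to_nat v"
  proof (rule ccontr)
    assume "\<not> ?thesis"
    then obtain N where "to_nat ` S \<subseteq> {..<N}" by (auto simp: not_le)
    then have "finite (to_nat ` S)" by (rule finite_subset) simp
    then show False
      using \<open>infinite S\<close> finite_imageD inj_on_subset[OF inj_to_nat] by blast
  qed
next
  assume unbounded: "\<forall>N. \<exists>v\<in>S. N \<le> to_nat v"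
  show "infinite S"
  proof
    assume "finite S"
    then obtain N where "\<forall>v\<in>S. to_nat v < N"
      by (metis finite_imageI finite_nat_set_iff_bounded imageI)
    then show False using unbounded by (meson not_le)
  qed
qed

lemma distinct_prefixes: "b \<le> length v \<Longrightarrow> distinct (map (\<lambda>i. take i v) [a..<b])"
  by (auto simp: distinct_map inj_on_def dest: arg_cong[of _ _ length])

lemma concat_path_blocks:
  "a \<le> t \<Longrightarrow> concat (map (path_block n v) [a..<t]) = map (\<lambda>i. take i v) [a * n..<t * n]"
proof (induction t)
  case (Suc t)
  show ?case
  proof (cases "a = Suc t")
    case False
    then have "a \<le> t" using Suc by simp
    moreover have "[a * n..<t * n + n] = [a * n..<t * n] @ [t * n..<t * n + n]"
      using \<open>a \<le> t\<close> by (intro upt_add_eq_append) simp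
    ultimately show ?thesis
      using Suc by (simp add: path_block_def add.commute)
  qed simp
qed simp

lemma first_differing_block:
  assumes "length v = t * n" "length w = t * n" "v \<noteq> w"
  obtains s where "s < t" "take (s * n) v = take (s * n) w" "take (Suc s * n) v \<noteq> take (Suc s * n) w"
proof -
  define s where "s = (LEAST s. take (Suc s * n) v \<noteq> take (Suc s * n) w)"
  have "0 < t" using assms by (cases t) auto
  then have ex: "take (Suc (t - 1) * n) v \<noteq> take (Suc (t - 1) * n) w"
    using assms by simp
  have "take (Suc s * n) v \<noteq> take (Suc s * n) w"
    unfolding s_def by (rule LeastI[of _ "t - 1"]) (rule ex)
  moreover have "s < t"
  proof -
    have "s \<le> t - 1" unfolding s_def by (rule Least_le) (rule ex)
    then show ?thesis using \<open>0 < t\<close> by linarith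
  qed
  moreover have "take (s * n) v = take (s * n) w"
  proof (cases s)
    case (Suc s')
    then show ?thesis
      using not_less_Least[of s' "\<lambda>s. take (Suc s * n) v \<noteq> take (Suc s * n) w"] s_def by auto
  qed simp
  ultimately show ?thesis using that by blast
qed

definition block_event :: "'a measure \<Rightarrow> (nat list \<Rightarrow> 'a \<Rightarrow> nat) \<Rightarrow> nat \<Rightarrow> nat \<Rightarrow> nat list \<Rightarrow> 'a set" where
  "block_event M X n t v = {\<omega> \<in> space M. \<forall>b<t. covers (map (\<lambda>u. X u \<omega>) (path_block n v b))}"

locale cone_percolation = iid_radii M "ss_verts c" X p
  for M :: "'a measure" and c :: "nat \<Rightarrow> nat" and X p
begin

lemma sets_blocks_covered:
  fixes vss :: "nat \<Rightarrow> nat list list"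
  assumes "\<And>q. q < k \<Longrightarrow> set (vss q) \<subseteq> ss_verts c"
  shows "{\<omega> \<in> space M. \<forall>q<k. covers (map (\<lambda>u. X u \<omega>) (vss q))} \<in> events"
proof -
  have "Measurable.pred M (\<lambda>\<omega>. covers (map (\<lambda>u. X u \<omega>) (vss q)))" if "q < k" for q
    using assms[OF that] by (rule pred_radii)
  then have "Measurable.pred M (\<lambda>\<omega>. \<forall>q. q < k \<longrightarrow> covers (map (\<lambda>u. X u \<omega>) (vss q)))"
    by (intro pred_intros_countable(1) pred_intros_imp')
  then show ?thesis by (rule pred_def[THEN iffD1])
qed

lemma sets_block_event: "v \<in> ss_verts c \<Longrightarrow> block_event M X n t v \<in> events"
  unfolding block_event_def
  by (rule sets_blocks_covered) (auto simp: path_block_def take_in_ss_verts)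

lemma prob_block_event:
  assumes "v \<in> level c (t * n)"
  shows "prob (block_event M X n t v) = cover_prob p n ^ t"
proof -
  define vss where "vss = map (path_block n v) [0..<t]"
  have concat: "concat vss = map (\<lambda>i. take i v) [0..<t * n]"
    unfolding vss_def using concat_path_blocks[of 0 t n v] by simp
  have "block_event M X n t v = {\<omega> \<in> space M. \<forall>q<length vss. covers (map (\<lambda>u. X u \<omega>) (vss ! q))}"
    by (auto simp: vss_def block_event_def)
  also have "prob \<dots> = cover_prob p n ^ length vss"
  proof (rule prob_blocks_covered)
    show "\<forall>vs\<in>set vss. length vs = n" by (auto simp: vss_def)
    show "distinct (concat vss)" "set (concat vss) \<subseteq> ss_verts c"
      unfolding concat using assms by (auto simp: level_def distinct_prefixes take_in_ss_verts)
  qed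
  finally show ?thesis by (simp add: vss_def)
qed

text \<open>If the paths to v and w separate in block s, the events depend on the t blocks of v
  and the t - s - 1 blocks of w below the separation point, which are all disjoint.\<close>

lemma prob_block_event_Int:
  assumes v: "v \<in> level c (t * n)" and w: "w \<in> level c (t * n)" and "s < t"
    and agree: "take (s * n) v = take (s * n) w"
    and differ: "take (Suc s * n) v \<noteq> take (Suc s * n) w"
  shows "prob (block_event M X n t v \<inter> block_event M X n t w) \<le> cover_prob p n ^ (t + (t - Suc s))"
proof -
  define vss where "vss = map (path_block n v) [0..<t] @ map (path_block n w) [Suc s..<t]"
  have lv: "length v = t * n" "v \<in> ss_verts c" and lw: "length w = t * n" "w \<in> ss_verts c"
    using v w by (auto simp: level_def)
  have concat: "concat vss = map (\<lambda>i. take i v) [0..<t * n] @ map (\<lambda>i. take i w) [Suc s * n..<t * n]"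
    unfolding vss_def using concat_path_blocks[of 0 t n v] concat_path_blocks[of "Suc s" t n w] \<open>s < t\<close>
    by simp
  have vss_verts: "set (concat vss) \<subseteq> ss_verts c"
    unfolding concat using lv lw take_in_ss_verts by auto
  have "set (vss ! q) \<subseteq> ss_verts c" if "q < length vss" for q
    using vss_verts nth_mem[OF that] by auto
  then have sets: "{\<omega> \<in> space M. \<forall>q<length vss. covers (map (\<lambda>u. X u \<omega>) (vss ! q))} \<in> events"
    by (rule sets_blocks_covered)
  have "block_event M X n t v \<inter> block_event M X n t w
      \<subseteq> {\<omega> \<in> space M. \<forall>q<length vss. covers (map (\<lambda>u. X u \<omega>) (vss ! q))}"
    using \<open>s < t\<close> by (auto simp: vss_def nth_append block_event_def)
  then have "prob (block_event M X n t v \<inter> block_event M X n t w)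
      \<le> prob {\<omega> \<in> space M. \<forall>q<length vss. covers (map (\<lambda>u. X u \<omega>) (vss ! q))}"
    using sets by (rule finite_measure_mono)
  also have "\<dots> = cover_prob p n ^ length vss"
  proof (rule prob_blocks_covered)
    show "\<forall>vs\<in>set vss. length vs = n" by (auto simp: vss_def)
    show "set (concat vss) \<subseteq> ss_verts c" by (fact vss_verts)
    have "take i v \<noteq> take j w" if "i < t * n" "Suc s * n \<le> j" for i j
      using that differ lv lw by (metis length_take min.absorb4 min_def nat_less_le take_take)
    then show "distinct (concat vss)"
      unfolding concat using lv lw by (auto simp: distinct_prefixes)
  qed
  finally show ?thesis by (simp add: vss_def)
qed

lemma block_event_Suc_subset:
  assumes "v \<in> level c (Suc t * n)"
  shows "take (t * n) v \<in> level c (t * n)"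
    and "block_event M X n (Suc t) v \<subseteq> block_event M X n t (take (t * n) v)"
proof -
  show "take (t * n) v \<in> level c (t * n)"
    using assms take_in_ss_verts by (auto simp: level_def)
  have "path_block n (take (t * n) v) b = path_block n v b" if "b < t" for b
  proof -
    have "b * n + n \<le> t * n" using that by (metis add.commute mult_Suc mult_le_mono1 Suc_leI)
    then show ?thesis by (auto simp: path_block_def min_def)
  qed
  then show "block_event M X n (Suc t) v \<subseteq> block_event M X n t (take (t * n) v)"
    by (auto simp: block_event_def)
qed

lemma pred_infected: "Measurable.pred M (\<lambda>\<omega>. u \<in> infected c (\<lambda>v. X v \<omega>) m)"
proof (induction m arbitrary: u)
  case (Suc m)
  have "Measurable.pred M (\<lambda>\<omega>. w \<in> ss_verts c \<and> w \<in> infected c (\<lambda>v. X v \<omega>) m \<and> u \<in> cone c w (X w \<omega>))"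
    for w
  proof (cases "w \<in> ss_verts c")
    case True
    then have "X w \<in> measurable M (count_space UNIV)" using measurable_X by blast
    from measurable_compose[OF this measurable_count_space, of "\<lambda>r. u \<in> cone c w r"]
    have "Measurable.pred M (\<lambda>\<omega>. u \<in> cone c w (X w \<omega>))" .
    with Suc.IH[of w] True show ?thesis by simp
  qed simp
  then have "Measurable.pred M (\<lambda>\<omega>. \<exists>w. w \<in> ss_verts c \<and> w \<in> infected c (\<lambda>v. X v \<omega>) m \<and> u \<in> cone c w (X w \<omega>))"
    by (rule pred_intros_countable(2))
  moreover have "u \<in> infected c (\<lambda>v. X v \<omega>) (Suc m) \<longleftrightarrow>
      (\<exists>w. w \<in> ss_verts c \<and> w \<in> infected c (\<lambda>v. X v \<omega>) m \<and> u \<in> cone c w (X w \<omega>))" for \<omega>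
    using infected_subset_ss_verts[of c "\<lambda>v. X v \<omega>" m] by fastforce
  ultimately show ?case by simp
qed simp

lemma sets_survival: "{\<omega> \<in> space M. infinite (\<Union>m. infected c (\<lambda>v. X v \<omega>) m)} \<in> events"
proof -
  have "Measurable.pred M (\<lambda>\<omega>. \<forall>N. \<exists>v. (\<exists>m. v \<in> infected c (\<lambda>v. X v \<omega>) m) \<and> N \<le> to_nat v)"
    by (intro pred_intros_countable pred_intros_conj2' pred_infected)
  moreover have "infinite (\<Union>m. infected c (\<lambda>v. X v \<omega>) m)
      \<longleftrightarrow> (\<forall>N. \<exists>v. (\<exists>m. v \<in> infected c (\<lambda>v. X v \<omega>) m) \<and> N \<le> to_nat v)" for \<omega>
    unfolding infinite_iff_to_nat_unbounded by blast
  ultimately show ?thesis by (simp only: pred_def)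
qed

end

text \<open>A vertex at depth t (in blocks) has at most Q s partners separating from it in block s, each
  pair contributing \<pi>^(t + (t - s - 1)); since N = N_s Q s with N_s \<ge> (m / \<pi>)^s, the sum is
  dominated by a geometric series.\<close>

lemma second_moment_ratio_bound:
  fixes \<pi> m N :: real and Q Ns :: "nat \<Rightarrow> real"
  assumes "0 < \<pi>" "1 < m" and Nt: "1 \<le> N * \<pi> ^ t"
    and NQ: "\<And>s. s < t \<Longrightarrow> N = Ns s * Q s"
    and Ns: "\<And>s. s < t \<Longrightarrow> m ^ s \<le> Ns s * \<pi> ^ s"
    and Q: "\<And>s. 0 \<le> Q s"
  shows "\<pi> ^ t + (\<Sum>s<t. \<pi> ^ (t + (t - Suc s)) * Q s) \<le> (1 + 1 / (\<pi> * (1 - 1 / m))) * (N * \<pi> ^ (2 * t))"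
proof -
  define A where "A = N * \<pi> ^ (2 * t)"
  have A: "A = (N * \<pi> ^ t) * \<pi> ^ t" unfolding A_def by (simp add: mult_2 power_add)
  then have "0 \<le> A" using Nt \<open>0 < \<pi>\<close> by simp
  have first: "\<pi> ^ t \<le> A"
  proof -
    have "\<pi> ^ t * 1 \<le> \<pi> ^ t * (N * \<pi> ^ t)" using Nt \<open>0 < \<pi>\<close> by (intro mult_left_mono) auto
    then show ?thesis unfolding A by (simp add: mult.commute)
  qed
  have each: "\<pi> ^ (t + (t - Suc s)) * Q s \<le> A * (1 / \<pi>) * (1 / m) ^ s" if s: "s < t" for s
  proof -
    have "\<pi> ^ (t + (t - Suc s)) * \<pi> ^ Suc s = \<pi> ^ (t + (t - Suc s) + Suc s)"
      by (rule power_add[symmetric])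
    also have "t + (t - Suc s) + Suc s = 2 * t" using s by simp
    finally have split: "\<pi> ^ (t + (t - Suc s)) * \<pi> ^ Suc s = \<pi> ^ (2 * t)" .
    have "\<pi> ^ (t + (t - Suc s)) * Q s * (\<pi> * m ^ s)
        \<le> \<pi> ^ (t + (t - Suc s)) * Q s * (\<pi> * (Ns s * \<pi> ^ s))"
      using Ns[OF s] \<open>0 < \<pi>\<close> Q[of s] by (intro mult_left_mono) auto
    also have "\<dots> = (\<pi> ^ (t + (t - Suc s)) * \<pi> ^ Suc s) * (Ns s * Q s)" by (simp add: algebra_simps)
    also have "\<dots> = A" unfolding split A_def NQ[OF s] by simp
    finally have "\<pi> ^ (t + (t - Suc s)) * Q s * (\<pi> * m ^ s) \<le> A" .
    then show ?thesis
      using \<open>0 < \<pi>\<close> \<open>1 < m\<close> by (simp add: le_divide_eq power_one_over)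
  qed
  have geometric: "(\<Sum>s<t. (1 / m) ^ s) \<le> 1 / (1 - 1 / m)"
  proof -
    have "0 \<le> 1 / m" "1 / m < 1" using \<open>1 < m\<close> by auto
    then show ?thesis by (subst sum_gp_strict) (auto intro: divide_right_mono)
  qed
  have "(\<Sum>s<t. \<pi> ^ (t + (t - Suc s)) * Q s) \<le> (\<Sum>s<t. A * (1 / \<pi>) * (1 / m) ^ s)"
    by (rule sum_mono) (rule each, simp)
  also have "\<dots> = A * (1 / \<pi>) * (\<Sum>s<t. (1 / m) ^ s)" by (simp add: sum_distrib_left)
  also have "\<dots> \<le> A * (1 / \<pi>) * (1 / (1 - 1 / m))"
    using geometric \<open>0 \<le> A\<close> \<open>0 < \<pi>\<close> by (intro mult_left_mono) auto
  finally have "\<pi> ^ t + (\<Sum>s<t. \<pi> ^ (t + (t - Suc s)) * Q s) \<le> A + A * (1 / \<pi>) * (1 / (1 - 1 / m))"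
    using first by simp
  also have "\<dots> = (1 + 1 / (\<pi> * (1 - 1 / m))) * A" by (simp add: algebra_simps)
  finally show ?thesis by (simp add: A_def)
qed

context cone_percolation
begin

lemma sum_prob_block_event_Int_le:
  assumes v: "v \<in> level c (t * n)"
  shows "(\<Sum>w\<in>level c (t * n). prob (block_event M X n t v \<inter> block_event M X n t w))
         \<le> cover_prob p n ^ t
           + (\<Sum>s<t. cover_prob p n ^ (t + (t - Suc s)) * real (\<Prod>j<t * n - s * n. c (s * n + j)))"
proof -
  define \<pi> where "\<pi> = cover_prob p n"
  define F where "F = level c (t * n)"
  have "0 \<le> \<pi>" by (simp add: \<pi>_def cover_prob_def)
  have pair: "prob (block_event M X n t v \<inter> block_event M X n t w)
      \<le> (\<Sum>s<t. if take (s * n) w = take (s * n) v then \<pi> ^ (t + (t - Suc s)) else 0)"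
    if w: "w \<in> F - {v}" for w
  proof -
    obtain s where s: "s < t" "take (s * n) v = take (s * n) w" "take (Suc s * n) v \<noteq> take (Suc s * n) w"
      using first_differing_block[of v t n w] v w by (auto simp: F_def level_def)
    have "prob (block_event M X n t v \<inter> block_event M X n t w) \<le> \<pi> ^ (t + (t - Suc s))"
      unfolding \<pi>_def using v w s by (intro prob_block_event_Int) (auto simp: F_def)
    also have "\<dots> \<le> (\<Sum>s<t. if take (s * n) w = take (s * n) v then \<pi> ^ (t + (t - Suc s)) else 0)"
      using member_le_sum[of s "{..<t}" "\<lambda>s. if take (s * n) w = take (s * n) v then \<pi> ^ (t + (t - Suc s)) else 0"]
        s \<open>0 \<le> \<pi>\<close>
      by simp
    finally show ?thesis .
  qed
  have agreeing: "real (card {w \<in> F - {v}. take (s * n) w = take (s * n) v})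
                  \<le> real (\<Prod>j<t * n - s * n. c (s * n + j))" if "s < t" for s
  proof -
    have "s * n \<le> t * n" using that by simp
    then have "{w \<in> F. take (s * n) w = take (s * n) v}
        = {w \<in> ss_verts c. length w = s * n + (t * n - s * n) \<and> take (s * n) w = take (s * n) v}"
      by (auto simp: F_def level_def)
    moreover have "take (s * n) v \<in> ss_verts c" "length (take (s * n) v) = s * n"
      using v \<open>s * n \<le> t * n\<close> take_in_ss_verts by (auto simp: level_def)
    ultimately have "card {w \<in> F. take (s * n) w = take (s * n) v} = (\<Prod>j<t * n - s * n. c (s * n + j))"
      using card_descendants by simp
    moreover have "card {w \<in> F - {v}. take (s * n) w = take (s * n) v} \<le> card {w \<in> F. take (s * n) w = take (s * n) v}"
      using finite_level by (intro card_mono) (auto simp: F_def)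
    ultimately show ?thesis by (simp only: of_nat_le_iff)
  qed
  have "(\<Sum>w\<in>F. prob (block_event M X n t v \<inter> block_event M X n t w))
      = prob (block_event M X n t v \<inter> block_event M X n t v)
        + (\<Sum>w\<in>F - {v}. prob (block_event M X n t v \<inter> block_event M X n t w))"
    unfolding F_def by (rule sum.remove[OF finite_level v])
  also have "prob (block_event M X n t v \<inter> block_event M X n t v) = \<pi> ^ t"
    using prob_block_event[OF v] by (simp add: \<pi>_def)
  also have "(\<Sum>w\<in>F - {v}. prob (block_event M X n t v \<inter> block_event M X n t w))
      \<le> (\<Sum>w\<in>F - {v}. \<Sum>s<t. if take (s * n) w = take (s * n) v then \<pi> ^ (t + (t - Suc s)) else 0)"
    by (rule sum_mono) (rule pair)
  also have "\<dots> = (\<Sum>s<t. \<Sum>w\<in>F - {v}. if take (s * n) w = take (s * n) v then \<pi> ^ (t + (t - Suc s)) else 0)"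
    by (rule sum.swap)
  also have "\<dots> = (\<Sum>s<t. \<pi> ^ (t + (t - Suc s)) * real (card {w \<in> F - {v}. take (s * n) w = take (s * n) v}))"
    using finite_level[of c "t * n"] unfolding F_def[symmetric]
    by (intro sum.cong refl) (simp add: sum.If_cases Int_def)
  also have "\<dots> \<le> (\<Sum>s<t. \<pi> ^ (t + (t - Suc s)) * real (\<Prod>j<t * n - s * n. c (s * n + j)))"
    using agreeing \<open>0 \<le> \<pi>\<close> by (intro sum_mono mult_left_mono) auto
  finally show ?thesis by (simp only: F_def \<pi>_def)
qed

lemma prob_UN_block_event_ge:
  assumes "0 < cover_prob p n" "1 < m"
    and growth: "\<And>s. m ^ s \<le> real (\<Prod>i<s * n. c i) * cover_prob p n ^ s"
  shows "1 / (1 + 1 / (cover_prob p n * (1 - 1 / m))) \<le> prob (\<Union>v\<in>level c (t * n). block_event M X n t v)"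
proof -
  define \<pi> where "\<pi> = cover_prob p n"
  define C where "C = 1 + 1 / (\<pi> * (1 - 1 / m))"
  define F where "F = level c (t * n)"
  define N where "N = real (\<Prod>i<t * n. c i)"
  have "0 < 1 - 1 / m" using \<open>1 < m\<close> by simp
  then have "0 < C" using assms(1) by (simp add: C_def \<pi>_def add_pos_pos)
  have card_F: "real (card F) = N" by (simp add: F_def N_def card_level)
  have "1 \<le> m ^ t" using \<open>1 < m\<close> by simp
  then have Nt: "1 \<le> N * \<pi> ^ t"
    using growth[of t] unfolding N_def \<pi>_def by linarith
  have first_moment: "(\<Sum>v\<in>F. prob (block_event M X n t v)) = N * \<pi> ^ t"
    using card_F by (simp add: F_def \<pi>_def prob_block_event)
  have "(\<Sum>v\<in>F. \<Sum>w\<in>F. prob (block_event M X n t v \<inter> block_event M X n t w))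
      \<le> (\<Sum>v\<in>F. C * (N * \<pi> ^ (2 * t)))"
  proof (rule sum_mono)
    fix v assume "v \<in> F"
    have "N = real (\<Prod>i<s * n. c i) * real (\<Prod>j<t * n - s * n. c (s * n + j))" if "s < t" for s
      using that prod_lessThan_add_shift[where a="s * n" and b="t * n - s * n" and f=c] by (simp add: N_def)
    then have "\<pi> ^ t + (\<Sum>s<t. \<pi> ^ (t + (t - Suc s)) * real (\<Prod>j<t * n - s * n. c (s * n + j)))
               \<le> C * (N * \<pi> ^ (2 * t))"
      unfolding C_def using assms Nt growth
      by (intro second_moment_ratio_bound[where Ns="\<lambda>s. real (\<Prod>i<s * n. c i)"])
         (auto simp: \<pi>_def intro: prod_nonneg)
    then show "(\<Sum>w\<in>F. prob (block_event M X n t v \<inter> block_event M X n t w)) \<le> C * (N * \<pi> ^ (2 * t))"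
      using order.trans[OF sum_prob_block_event_Int_le] \<open>v \<in> F\<close> unfolding F_def \<pi>_def by blast
  qed
  also have "\<dots> = C * (N * \<pi> ^ t)^2"
    using card_F by (simp add: power_mult_distrib power_mult power2_eq_square mult_ac)
  finally have second_moment: "(\<Sum>v\<in>F. \<Sum>w\<in>F. prob (block_event M X n t v \<inter> block_event M X n t w))
                               \<le> C * (N * \<pi> ^ t)^2" .
  have "(N * \<pi> ^ t)^2 \<le> prob (\<Union>v\<in>F. block_event M X n t v)
                         * (\<Sum>v\<in>F. \<Sum>w\<in>F. prob (block_event M X n t v \<inter> block_event M X n t w))"
    unfolding first_moment[symmetric]
    by (rule second_moment_method)
       (use finite_level sets_block_event first_moment Nt in \<open>auto simp: F_def level_def\<close>)
  also have "\<dots> \<le> prob (\<Union>v\<in>F. block_event M X n t v) * (C * (N * \<pi> ^ t)^2)"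
    using second_moment by (intro mult_left_mono) auto
  finally have "1 * (N * \<pi> ^ t)^2 \<le> (prob (\<Union>v\<in>F. block_event M X n t v) * C) * (N * \<pi> ^ t)^2"
    by (simp add: mult_ac)
  moreover have "0 < (N * \<pi> ^ t)^2" by (intro zero_less_power) (use Nt in linarith)
  ultimately have "1 \<le> prob (\<Union>v\<in>F. block_event M X n t v) * C"
    by (rule mult_right_le_imp_le)
  then show ?thesis using \<open>0 < C\<close> by (simp add: C_def \<pi>_def F_def divide_le_eq mult.commute)
qed

lemma survival_prob_pos:
  assumes "0 < n" "0 < cover_prob p n" "1 < m"
    and growth: "\<And>s. m ^ s \<le> real (\<Prod>i<s * n. c i) * cover_prob p n ^ s"
  shows "0 < prob {\<omega> \<in> space M. infinite (\<Union>k. infected c (\<lambda>v. X v \<omega>) k)}"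
proof -
  define U where "U t = (\<Union>v\<in>level c (t * n). block_event M X n t v)" for t
  have sets_U: "U t \<in> events" for t
    unfolding U_def using finite_level by (intro sets.finite_UN sets_block_event) (auto simp: level_def)
  have "U (Suc t) \<subseteq> U t" for t
  proof
    fix \<omega> assume "\<omega> \<in> U (Suc t)"
    then obtain v where v: "v \<in> level c (Suc t * n)" and "\<omega> \<in> block_event M X n (Suc t) v"
      by (auto simp: U_def)
    then have "\<omega> \<in> block_event M X n t (take (t * n) v)"
      using block_event_Suc_subset(2)[OF v] by blast
    then show "\<omega> \<in> U t"
      using block_event_Suc_subset(1)[OF v] unfolding U_def by blast
  qed
  then have "decseq U" by (rule decseq_SucI)
  then have "(\<lambda>t. prob (U t)) \<longlonglongrightarrow> prob (\<Inter>t. U t)"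
    using sets_U by (intro finite_Lim_measure_decseq) auto
  then have "1 / (1 + 1 / (cover_prob p n * (1 - 1 / m))) \<le> prob (\<Inter>t. U t)"
    by (rule LIMSEQ_le_const) (use prob_UN_block_event_ge[OF assms(2-4)] in \<open>auto simp: U_def\<close>)
  moreover have "0 < 1 - 1 / m" using \<open>1 < m\<close> by simp
  then have "0 < 1 / (1 + 1 / (cover_prob p n * (1 - 1 / m)))"
    using assms(2) by (simp add: add_pos_pos)
  moreover have "(\<Inter>t. U t) \<subseteq> {\<omega> \<in> space M. infinite (\<Union>k. infected c (\<lambda>v. X v \<omega>) k)}"
  proof
    fix \<omega> assume \<omega>: "\<omega> \<in> (\<Inter>t. U t)"
    then have "\<omega> \<in> space M" using sets_U[of 0] sets.sets_into_space by blast
    moreover have "\<exists>v\<in>ss_verts c. length v = t * n \<and> (\<forall>b<t. covers (map (\<lambda>v. X v \<omega>) (path_block n v b)))"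
      for t
    proof -
      obtain v where "v \<in> level c (t * n)" "\<omega> \<in> block_event M X n t v"
        using \<omega> by (auto simp: U_def)
      then show ?thesis by (auto simp: level_def block_event_def)
    qed
    ultimately show "\<omega> \<in> {\<omega> \<in> space M. infinite (\<Union>k. infected c (\<lambda>v. X v \<omega>) k)}"
      using infinite_infected_if_blocks_covered[OF \<open>0 < n\<close>, of c "\<lambda>v. X v \<omega>"] by blast
  qed
  then have "prob (\<Inter>t. U t) \<le> prob {\<omega> \<in> space M. infinite (\<Union>k. infected c (\<lambda>v. X v \<omega>) k)}"
    using sets_survival by (rule finite_measure_mono)
  ultimately show ?thesis by linarith
qed

end

section \<open>Choosing the block length\<close>

lemma exists_growth_rates:
  fixes L D :: real
  assumes "L \<le> 1" "exp (- D) < L"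
  obtains \<beta> \<gamma> where "0 < \<beta>" "\<beta> < L" "1 < \<gamma>" "ln \<gamma> < D" "1 < \<beta> * \<gamma>"
proof -
  have "0 < L" using assms(2) exp_gt_zero[of "- D"] by linarith
  define a where "a = ln L + D"
  have "- D < ln L"
    using ln_less_cancel_iff[of "exp (- D)" L] assms(2) \<open>0 < L\<close> by simp
  then have "0 < a" by (simp add: a_def)
  have "ln L \<le> 0" using assms(1) \<open>0 < L\<close> by simp
  show ?thesis
  proof (rule that[of "exp (ln L - a / 3)" "exp (D - a / 3)"])
    have "exp (ln L - a / 3) < exp (ln L)" using \<open>0 < a\<close> by simp
    then show "exp (ln L - a / 3) < L" using \<open>0 < L\<close> by simp
    show "1 < exp (D - a / 3)" using \<open>ln L \<le> 0\<close> \<open>0 < a\<close> by (simp add: a_def)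
    show "1 < exp (ln L - a / 3) * exp (D - a / 3)"
      using \<open>0 < a\<close> by (simp add: a_def flip: exp_add)
  qed (use \<open>0 < a\<close> in simp_all)
qed

lemma power_lt_Mn_of_INF_gt:
  assumes "0 < n" "1 < g" and INF_gt: "ln g < (INF v\<in>ss_verts c. ln (real (Mn c n v))) / real n"
    and v: "v \<in> ss_verts c"
  shows "g ^ n < real (Mn c n v)"
proof -
  have "0 \<le> ln (real k)" for k :: nat by (cases k) auto
  then have "bdd_below ((\<lambda>v. ln (real (Mn c n v))) ` ss_verts c)"
    by (intro bdd_belowI[of _ 0]) auto
  then have "(INF v\<in>ss_verts c. ln (real (Mn c n v))) \<le> ln (real (Mn c n v))"
    using v by (rule cINF_lower)
  moreover have "real n * ln g < (INF v\<in>ss_verts c. ln (real (Mn c n v)))"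
    using INF_gt \<open>0 < n\<close> by (simp add: less_divide_eq mult.commute)
  ultimately have lt: "ln (g ^ n) < ln (real (Mn c n v))"
    using \<open>1 < g\<close> by (simp add: ln_realpow)
  moreover have "0 < ln (g ^ n)" using \<open>1 < g\<close> \<open>0 < n\<close> by simp
  ultimately have "0 < Mn c n v" by (cases "Mn c n v") auto
  then show ?thesis using lt \<open>1 < g\<close> by simp
qed

lemma power_le_level_card:
  assumes "0 < n" "0 < g" and Mn: "\<And>v. v \<in> ss_verts c \<Longrightarrow> g < real (Mn c n v)"
  shows "g ^ s \<le> real (\<Prod>i<s * n. c i)"
proof -
  have "0 < c i" for i
  proof (induction i rule: less_induct)
    case (less i)
    have "replicate i 0 \<in> ss_verts c" using less by (auto simp: ss_verts_def)
    then have "g < real (\<Prod>j<n. c (i + j))"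
      using Mn Mn_eq by (metis length_replicate)
    then have "0 < real (\<Prod>j<n. c (i + j))" using \<open>0 < g\<close> by linarith
    then have "(\<Prod>j<n. c (i + j)) \<noteq> 0" by (simp only: of_nat_0_less_iff neq0_conv)
    then show ?case using \<open>0 < n\<close> by (metis add_0_right lessThan_iff neq0_conv prod_zero_iff finite_lessThan)
  qed
  then have block: "g < real (\<Prod>j<n. c (d + j))" for d
    using Mn[of "replicate d 0"] Mn_eq[of "replicate d 0" c n] by (simp add: ss_verts_def)
  show ?thesis
  proof (induction s)
    case (Suc s)
    have "g ^ Suc s = g ^ s * g" by simp
    also have "\<dots> \<le> real (\<Prod>i<s * n. c i) * real (\<Prod>j<n. c (s * n + j))"
      using Suc block[of "s * n"] \<open>0 < g\<close> by (intro mult_mono) (auto intro: prod_nonneg)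
    also have "\<dots> = real (\<Prod>i<Suc s * n. c i)"
      using prod_lessThan_add_shift[where a="s * n" and b=n and f=c] by (simp add: add.commute)
    finally show ?case .
  qed simp
qed

lemma exists_supercritical_block_length:
  fixes c :: "nat \<Rightarrow> nat" and p :: "nat pmf" and D L :: real
  assumes dim: "(\<lambda>n. (INF v\<in>ss_verts c. ln (real (Mn c n v))) / real n) \<longlonglongrightarrow> D"
    and rho_lim: "(\<lambda>n. root n (rho p n)) \<longlonglongrightarrow> L"
    and gt: "L > exp (- D)"
  obtains n m where "0 < n" "0 < cover_prob p n" "1 < m"
    "\<And>s. m ^ s \<le> real (\<Prod>i<s * n. c i) * cover_prob p n ^ s"
proof -
  have "L \<le> 1"
    using rho_lim by (rule LIMSEQ_le_const2) (use rho_le_1 in \<open>auto intro!: exI[of _ 1]\<close>)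
  then obtain \<beta> \<gamma> where "0 < \<beta>" "\<beta> < L" "1 < \<gamma>" "ln \<gamma> < D" "1 < \<beta> * \<gamma>"
    using gt by (rule exists_growth_rates)
  have "eventually (\<lambda>n. \<beta> < root n (rho p n) \<and> ln \<gamma> < (INF v\<in>ss_verts c. ln (real (Mn c n v))) / real n
                         \<and> 0 < n) sequentially"
    using order_tendstoD(1)[OF rho_lim \<open>\<beta> < L\<close>] order_tendstoD(1)[OF dim \<open>ln \<gamma> < D\<close>]
      eventually_gt_at_top[of 0]
    by eventually_elim auto
  then obtain n where "\<beta> < root n (rho p n)" and INF_gt: "ln \<gamma> < (INF v\<in>ss_verts c. ln (real (Mn c n v))) / real n"
    and "0 < n"
    unfolding eventually_sequentially by blast
  define \<pi> where "\<pi> = cover_prob p n"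
  have "\<beta> ^ n < rho p n"
    using power_strict_mono[OF \<open>\<beta> < root n (rho p n)\<close>, of n] \<open>0 < \<beta>\<close> \<open>0 < n\<close> rho_nonneg
    by (simp add: real_root_pow_pos2)
  then have "\<beta> ^ n < \<pi>" using rho_le_cover_prob[of p n] by (simp add: \<pi>_def)
  have growth: "(\<gamma> ^ n) ^ s \<le> real (\<Prod>i<s * n. c i)" for s
    using \<open>0 < n\<close> \<open>1 < \<gamma>\<close> power_lt_Mn_of_INF_gt[OF \<open>0 < n\<close> \<open>1 < \<gamma>\<close> INF_gt]
    by (intro power_le_level_card) auto
  show ?thesis
  proof (rule that[of n "\<gamma> ^ n * \<pi>"], unfold \<pi>_def[symmetric])
    have "0 < \<beta> ^ n" using \<open>0 < \<beta>\<close> by simp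
    then show "0 < \<pi>" using \<open>\<beta> ^ n < \<pi>\<close> by linarith
    have "1 < (\<beta> * \<gamma>) ^ n" using \<open>1 < \<beta> * \<gamma>\<close> \<open>0 < n\<close> by simp
    also have "\<dots> \<le> \<gamma> ^ n * \<pi>"
      using \<open>\<beta> ^ n < \<pi>\<close> \<open>1 < \<gamma>\<close> by (simp add: power_mult_distrib mult.commute)
    finally show "1 < \<gamma> ^ n * \<pi>" .
    show "(\<gamma> ^ n * \<pi>) ^ s \<le> real (\<Prod>i<s * n. c i) * \<pi> ^ s" for s
      using growth[of s] \<open>0 < \<pi>\<close> by (simp add: power_mult_distrib mult_right_mono)
  qed (fact \<open>0 < n\<close>)
qed

theorem theorem5:
  fixes c :: "nat \<Rightarrow> nat" and p :: "nat pmf" and M :: "'a measure"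
    and X :: "nat list \<Rightarrow> 'a \<Rightarrow> nat" and D L :: real
  assumes p0: "0 < pmf p 0" "pmf p 0 < 1"
    and ps: "prob_space M"
    and meas: "\<forall>v\<in>ss_verts c. X v \<in> measurable M (count_space UNIV)"
    and indep: "prob_space.indep_vars M (\<lambda>_. count_space UNIV) X (ss_verts c)"
    and law: "\<forall>v\<in>ss_verts c. distr M (count_space UNIV) (X v) = measure_pmf p"
    and dim: "(\<lambda>n. (INF v\<in>ss_verts c. ln (real (Mn c n v))) / real n) \<longlonglongrightarrow> D"
    and rho_lim: "(\<lambda>n. root n (rho p n)) \<longlonglongrightarrow> L"
    and gt: "L > exp (- D)"
  shows "measure M {\<omega> \<in> space M. infinite (\<Union>n. infected c (\<lambda>v. X v \<omega>) n)} > 0"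
proof -
  interpret cone_percolation M c X p
    using ps meas indep law by (simp add: cone_percolation_def iid_radii_def iid_radii_axioms_def)
  obtain n m where "0 < n" "0 < cover_prob p n" "1 < m"
    "\<And>s. m ^ s \<le> real (\<Prod>i<s * n. c i) * cover_prob p n ^ s"
    using exists_supercritical_block_length[OF dim rho_lim gt] by blast
  then show ?thesis by (rule survival_prob_pos)
qed

end
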